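(* For $\mu\in\mathbb C$ and complex numbers $x_1,\dots,x_N$ and $y_1,\dots,y_N$ (pairwise distinct within each family and $x_a\neq y_b$, so that all expressions are defined), $$\mathcal I^{(\mu)}_N(\{x\},\{y\})=(-1)^N\mathcal A^-_{\{x\}}\!\left[\mu E^+_{\{y\}}\right]=(-1)^N\mathcal A^+_{\{y\}}\!\left[\mu E^-_{\{x\}}\right].$$
   Context: Let $\eta\in\mathbb C\setminus\{0\}$. For a family $\{x\}=\{x_1,\dots,x_M\}$ and $y\in\mathbb C$, $E^\pm_{\{x\}}(y)=\prod_{n=1}^M\frac{y-x_n\pm\eta}{y-x_n}$. With $V(x_1,\dots,x_M)=\prod_{1\le b<a\le M}(x_a-x_b)$, for pairwise distinct $x_a$ and a function $f$ defined there, $\mathcal A^\pm_{\{x\}}[f]=\det_{1\le a,b\le M}[x_a^{b-1}-f(x_a)(x_a\pm\eta)^{b-1}]/V(x_1,\dots,x_M)$. Let $t_\mu(x)=\frac\mu x-\frac1{x+\eta}$. The generalized Izergin determinant is $$\mathcal I^{(\mu)}_N(\{x\},\{y\})=\frac{\prod_{a,b=1}^N(x_a-y_b+\eta)}{V(x_1,\dots,x_N)V(y_N,\dots,y_1)}\det_{1\le a,b\le N}\big[t_\mu(x_a-y_b)\big].$$ *)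

theory Defs
  imports "Jordan_Normal_Form.Determinant"
begin

text \<open>Families are 0-indexed: the paper's x_1,...,x_M are x 0, ..., x (M-1).
  Determinants are the Jordan_Normal_Form determinant of an explicit M x M matrix.\<close>

definition E_plus :: "complex \<Rightarrow> nat \<Rightarrow> (nat \<Rightarrow> complex) \<Rightarrow> complex \<Rightarrow> complex" where
  "E_plus \<eta> M x y = (\<Prod>n<M. (y - x n + \<eta>) / (y - x n))"

definition E_minus :: "complex \<Rightarrow> nat \<Rightarrow> (nat \<Rightarrow> complex) \<Rightarrow> complex \<Rightarrow> complex" where
  "E_minus \<eta> M x y = (\<Prod>n<M. (y - x n - \<eta>) / (y - x n))"

definition Vand :: "nat \<Rightarrow> (nat \<Rightarrow> complex) \<Rightarrow> complex" where
  "Vand M x = (\<Prod>a<M. \<Prod>b<a. (x a - x b))"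

definition A_plus :: "complex \<Rightarrow> nat \<Rightarrow> (nat \<Rightarrow> complex) \<Rightarrow> (complex \<Rightarrow> complex) \<Rightarrow> complex" where
  "A_plus \<eta> M x f =
     det (mat M M (\<lambda>(a, b). x a ^ b - f (x a) * (x a + \<eta>) ^ b)) / Vand M x"

definition A_minus :: "complex \<Rightarrow> nat \<Rightarrow> (nat \<Rightarrow> complex) \<Rightarrow> (complex \<Rightarrow> complex) \<Rightarrow> complex" where
  "A_minus \<eta> M x f =
     det (mat M M (\<lambda>(a, b). x a ^ b - f (x a) * (x a - \<eta>) ^ b)) / Vand M x"

definition t_mu :: "complex \<Rightarrow> complex \<Rightarrow> complex \<Rightarrow> complex" where
  "t_mu \<mu> \<eta> z = \<mu> / z - 1 / (z + \<eta>)"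

text \<open>Generalized Izergin determinant; V(y_N,...,y_1) is the Vandermonde of the reversed family.\<close>
definition Izergin :: "complex \<Rightarrow> complex \<Rightarrow> nat \<Rightarrow> (nat \<Rightarrow> complex) \<Rightarrow> (nat \<Rightarrow> complex) \<Rightarrow> complex" where
  "Izergin \<mu> \<eta> N x y =
     (\<Prod>a<N. \<Prod>b<N. (x a - y b + \<eta>)) / (Vand N x * Vand N (\<lambda>i. y (N - 1 - i)))
     * det (mat N N (\<lambda>(a, b). t_mu \<mu> \<eta> (x a - y b)))"

end

theory Submission
  imports Defs
begin

text \<open>Each row of the Izergin matrix is a combination of two Cauchy rows,
  t_mu(x_a - y_b) = mu/(x_a - y_b) - 1/(x_a + eta - y_b), so multilinearity expands its determinant
  into a sum over subsets S of rows of Cauchy determinants with nodes x_a (a in S) or x_a + eta.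
  Cauchy's formula evaluates each of them; the prefactor of the Izergin determinant turns the
  products over the unshifted rows into E^+_y(x_a), and the remaining Vandermonde of the shifted
  nodes is exactly the S-term of the same row expansion of the determinant defining A^-_x.
  The second identity follows from the first under the symmetry x, y \<mapsto> -y, -x, which transposes
  the Izergin matrix, exchanges A^- with A^+ and E^+ with E^-.\<close>

lemma permutes_lessThan_less: "p permutes {0..<(n::nat)} \<Longrightarrow> i < n \<Longrightarrow> p i < n"
  using permutes_in_image[of p "{0..<n}" i] by auto

lemma det_mat_add_rows:
  fixes P Q :: "nat \<Rightarrow> nat \<Rightarrow> 'a::comm_ring_1"
  shows "det (mat n n (\<lambda>(a,b). P a b + Q a b)) =
    (\<Sum>S\<in>Pow {0..<n}. det (mat n n (\<lambda>(a,b). if a \<in> S then Q a b else P a b)))"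
proof -
  let ?U = "{0..<n}" and ?perms = "{p. p permutes {0..<n}}"
  let ?term = "\<lambda>S p. signof p * ((\<Prod>i\<in>S. Q i (p i)) * (\<Prod>i\<in>?U - S. P i (p i)))"
  have "det (mat n n (\<lambda>(a,b). P a b + Q a b)) =
      (\<Sum>p\<in>?perms. signof p * (\<Prod>i\<in>?U. Q i (p i) + P i (p i)))"
    by (subst det_def'[of _ n]) (auto intro!: sum.cong prod.cong simp: add.commute permutes_lessThan_less)
  also have "\<dots> = (\<Sum>p\<in>?perms. \<Sum>S\<in>Pow ?U. ?term S p)"
    by (simp add: prod_add sum_distrib_left)
  also have "\<dots> = (\<Sum>S\<in>Pow ?U. \<Sum>p\<in>?perms. ?term S p)"
    by (rule sum.swap)
  also have "\<dots> = (\<Sum>S\<in>Pow ?U. det (mat n n (\<lambda>(a,b). if a \<in> S then Q a b else P a b)))"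
  proof (rule sum.cong[OF refl])
    fix S assume S: "S \<in> Pow ?U"
    have "(\<Prod>i\<in>?U. if i \<in> S then Q i (p i) else P i (p i)) =
        (\<Prod>i\<in>S. Q i (p i)) * (\<Prod>i\<in>?U - S. P i (p i))" for p
      using S by (subst prod.If_cases) (auto simp: Int_absorb1 Diff_eq)
    then show "(\<Sum>p\<in>?perms. ?term S p) = det (mat n n (\<lambda>(a,b). if a \<in> S then Q a b else P a b))"
      by (subst det_def'[of _ n]) (auto intro!: sum.cong prod.cong simp: permutes_lessThan_less)
  qed
  finally show ?thesis .
qed

lemma det_mat_scale_rows:
  fixes c :: "nat \<Rightarrow> 'a::comm_ring_1"
  shows "det (mat n n (\<lambda>(a,b). c a * F a b)) = (\<Prod>a<n. c a) * det (mat n n (\<lambda>(a,b). F a b))"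
proof -
  have "det (mat n n (\<lambda>(a,b). c a * F a b)) =
     (\<Sum>p\<in>{p. p permutes {0..<n}}. signof p * ((\<Prod>i=0..<n. c i) * (\<Prod>i=0..<n. F i (p i))))"
    by (subst det_def'[of _ n]) (auto intro!: sum.cong simp: prod.distrib permutes_lessThan_less)
  also have "\<dots> = (\<Prod>a<n. c a) * det (mat n n (\<lambda>(a,b). F a b))"
    by (subst det_def'[of _ n]) (auto intro!: sum.cong simp: sum_distrib_left permutes_lessThan_less atLeast0LessThan)
  finally show ?thesis .
qed

lemma det_mat_two_term_rows:
  fixes g :: "'b \<Rightarrow> nat \<Rightarrow> 'a::comm_ring_1"
  shows "det (mat n n (\<lambda>(a,b). \<alpha> a * g (u a) b + \<beta> a * g (v a) b)) =
    (\<Sum>S\<in>Pow {0..<n}. (\<Prod>a<n. if a \<in> S then \<beta> a else \<alpha> a) *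
        det (mat n n (\<lambda>(a,b). g (if a \<in> S then v a else u a) b)))"
proof -
  have "mat n n (\<lambda>(a,b). if a \<in> S then \<beta> a * g (v a) b else \<alpha> a * g (u a) b) =
      mat n n (\<lambda>(a,b). (if a \<in> S then \<beta> a else \<alpha> a) * g (if a \<in> S then v a else u a) b)" for S
    by (rule eq_matI) auto
  then show ?thesis
    by (simp only: det_mat_add_rows det_mat_scale_rows)
qed

lemma det_vandermonde: "det (mat n n (\<lambda>(a,b). u a ^ b)) = Vand n u"
proof (induction n)
  case 0
  show ?case by (simp add: Vand_def det_def)
next
  case (Suc n)
  define A where "A = mat (Suc n) (Suc n) (\<lambda>(a,b). u a ^ b)"
  define E where "E = mat (Suc n) (Suc n)
    (\<lambda>(i,j). (if i = j then 1 else 0) + (if j = Suc i then - u n else 0))"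
  have A: "A \<in> carrier_mat (Suc n) (Suc n)" and E: "E \<in> carrier_mat (Suc n) (Suc n)"
    by (auto simp: A_def E_def)
  have "det E = 1"
    by (subst det_upper_triangular[OF _ E]) (auto simp: upper_triangular_def E_def prod_list_diag_prod)
  define B where "B = A * E"
  have B: "B \<in> carrier_mat (Suc n) (Suc n)"
    using A E by (auto simp: B_def)
  have "det B = det A"
    unfolding B_def by (simp add: det_mult[OF A E] \<open>det E = 1\<close>)
  \<comment> \<open>subtracting u n times each column from the next clears the last row except its first entry\<close>
  have B_entry: "B $$ (a, j) = (if j = 0 then 1 else u a ^ (j - 1) * (u a - u n))"
    if "a < Suc n" "j < Suc n" for a j
  proof -
    have "B $$ (a, j) = (\<Sum>i = 0..<Suc n. u a ^ i * (if i = j then 1 else 0))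
        + (\<Sum>i = 0..<Suc n. u a ^ i * (if j = Suc i then - u n else 0))"
      using that by (simp add: B_def A_def E_def scalar_prod_def distrib_left sum.distrib)
    also have "\<dots> = (if j = 0 then 1 else u a ^ (j - 1) * (u a - u n))"
      using that by (cases j) (auto simp: if_distrib algebra_simps cong: if_cong)
    finally show ?thesis .
  qed
  have "det B = (\<Sum>j<Suc n. B $$ (n,j) * cofactor B n j)"
    by (rule laplace_expansion_row[OF B]) simp
  also have "\<dots> = (-1) ^ n * det (mat_delete B n 0)"
    by (subst sum.lessThan_Suc_shift) (simp add: B_entry cofactor_def)
  also have "mat_delete B n 0 = mat n n (\<lambda>(a,b). (u a - u n) * u a ^ b)"
    using B by (intro eq_matI) (auto simp: mat_delete_def B_entry mult.commute)
  also have "(-1) ^ n * det \<dots> = (\<Prod>a<n. u n - u a) * Vand n u"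
    by (simp add: det_mat_scale_rows Suc.IH prod_uminus[where f = "\<lambda>a. u a - u n", simplified])
  finally show ?case
    using \<open>det B = det A\<close> by (simp add: A_def Vand_def mult.commute)
qed

lemma Vand_nonzero: "inj_on u {..<n} \<Longrightarrow> Vand n u \<noteq> 0"
  unfolding Vand_def by (force simp: inj_on_def)

lemma Vand_shift: "Vand n (\<lambda>a. u a + c) = Vand n u"
  unfolding Vand_def by simp

lemma Vand_uminus: "Vand n (\<lambda>a. - u a) = (\<Prod>a<n. (-1) ^ a) * Vand n u"
proof -
  have "Vand n (\<lambda>a. - u a) = (\<Prod>a<n. \<Prod>b<a. - (u a - u b))"
    unfolding Vand_def by simp
  also have "\<dots> = (\<Prod>a<n. (-1) ^ a * (\<Prod>b<a. u a - u b))"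
    by (simp only: prod_uminus card_lessThan)
  finally show ?thesis
    by (simp only: prod.distrib Vand_def)
qed

lemma Vand_Sigma: "Vand n u = (\<Prod>(a,c)\<in>Sigma {..<n} (\<lambda>a. {..<a}). u a - u c)"
  unfolding Vand_def by (subst prod.Sigma) auto

lemma prod_differences_above_eq_Vand_uminus:
  "(\<Prod>a<n. \<Prod>c\<in>{Suc a..<n}. u a - u c) = Vand n (\<lambda>a. - u a)"
  unfolding Vand_Sigma by (subst prod.Sigma, simp, simp,
    rule prod.reindex_bij_witness[where i="\<lambda>(a,c). (c,a)" and j="\<lambda>(a,c). (c,a)"]) auto

lemma Vand_rev: "Vand n (\<lambda>a. u (n - 1 - a)) = Vand n (\<lambda>a. - u a)"
  unfolding Vand_Sigma
  by (rule prod.reindex_bij_witness[where i="\<lambda>(a,c). (n-1-c, n-1-a)" and j="\<lambda>(a,c). (n-1-c, n-1-a)"]) auto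

lemma prod_differences_eq_Vand:
  "(\<Prod>a<n. \<Prod>c\<in>{..<n}-{a}. u a - u c) = Vand n u * Vand n (\<lambda>a. u (n - 1 - a))"
proof -
  have "(\<Prod>c\<in>{..<n}-{a}. u a - u c) = (\<Prod>c<a. u a - u c) * (\<Prod>c\<in>{Suc a..<n}. u a - u c)"
    if "a < n" for a
  proof -
    have "{..<n}-{a} = {..<a} \<union> {Suc a..<n}"
      using that by auto
    moreover have "{..<a} \<inter> {Suc a..<n} = {}"
      by auto
    ultimately show ?thesis
      by (simp add: prod.union_disjoint)
  qed
  then have "(\<Prod>a<n. \<Prod>c\<in>{..<n}-{a}. u a - u c) =
      (\<Prod>a<n. (\<Prod>c<a. u a - u c) * (\<Prod>c\<in>{Suc a..<n}. u a - u c))"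
    by (intro prod.cong) simp_all
  also have "\<dots> = Vand n u * Vand n (\<lambda>a. - u a)"
    by (simp only: prod.distrib prod_differences_above_eq_Vand_uminus Vand_def)
  finally show ?thesis
    by (simp only: Vand_rev)
qed

definition lagrange_numerator :: "nat \<Rightarrow> (nat \<Rightarrow> complex) \<Rightarrow> nat \<Rightarrow> complex poly" where
  "lagrange_numerator n y b = (\<Prod>c\<in>{..<n}-{b}. [:- y c, 1:])"

lemma poly_lagrange_numerator:
  "poly (lagrange_numerator n y b) z = (\<Prod>c\<in>{..<n}-{b}. z - y c)"
  unfolding lagrange_numerator_def by (simp add: poly_prod)

lemma degree_lagrange_numerator: "b < n \<Longrightarrow> degree (lagrange_numerator n y b) < n"
proof -
  assume "b < n"
  have "degree (lagrange_numerator n y b) \<le> (\<Sum>c\<in>{..<n}-{b}. degree [:- y c, 1:])"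
    using degree_prod_sum_le[of "{..<n}-{b}" "\<lambda>c. [:- y c, 1:]"]
    by (simp add: lagrange_numerator_def o_def)
  also have "\<dots> < n"
    using \<open>b < n\<close> by simp
  finally show ?thesis .
qed

lemma poly_eq_sum_below_degree:
  fixes p :: "'a::{comm_semiring_0,semiring_1} poly"
  assumes "degree p < n"
  shows "poly p z = (\<Sum>k<n. coeff p k * z ^ k)"
proof -
  have "poly p z = (\<Sum>k\<le>degree p. coeff p k * z ^ k)"
    by (rule poly_altdef)
  also have "\<dots> = (\<Sum>k<n. coeff p k * z ^ k)"
    using assms by (intro sum.mono_neutral_left) (auto simp: coeff_eq_0)
  finally show ?thesis .
qed

lemma det_lagrange_numerators:
  "det (mat n n (\<lambda>(a,b). \<Prod>c\<in>{..<n}-{b}. w a - y c))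
     = Vand n w * det (mat n n (\<lambda>(k,b). coeff (lagrange_numerator n y b) k))"
proof -
  have "mat n n (\<lambda>(a,b). \<Prod>c\<in>{..<n}-{b}. w a - y c)
     = mat n n (\<lambda>(a,k). w a ^ k) * mat n n (\<lambda>(k,b). coeff (lagrange_numerator n y b) k)"
  proof (rule eq_matI)
    fix a b assume "a < dim_row (mat n n (\<lambda>(a,k). w a ^ k) *
        mat n n (\<lambda>(k,b). coeff (lagrange_numerator n y b) k))"
      and "b < dim_col (mat n n (\<lambda>(a,k). w a ^ k) *
        mat n n (\<lambda>(k,b). coeff (lagrange_numerator n y b) k))"
    then have "a < n" "b < n" by auto
    then show "mat n n (\<lambda>(a,b). \<Prod>c\<in>{..<n}-{b}. w a - y c) $$ (a, b) =
      (mat n n (\<lambda>(a,k). w a ^ k) * mat n n (\<lambda>(k,b). coeff (lagrange_numerator n y b) k)) $$ (a, b)"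
      using poly_eq_sum_below_degree[OF degree_lagrange_numerator, of b n y "w a"]
      by (simp add: scalar_prod_def atLeast0LessThan mult.commute poly_lagrange_numerator)
  qed auto
  then show ?thesis
    by (simp add: det_mult[of _ n] det_vandermonde)
qed

text \<open>Evaluating the previous identity at w = y makes the left-hand matrix diagonal.\<close>
lemma det_lagrange_numerator_coeffs:
  assumes "inj_on y {..<n}"
  shows "det (mat n n (\<lambda>(k,b). coeff (lagrange_numerator n y b) k)) = Vand n (\<lambda>i. y (n - 1 - i))"
proof -
  have "mat n n (\<lambda>(a,b). \<Prod>c\<in>{..<n}-{b}. y a - y c)
      = mat n n (\<lambda>(a,b). (\<Prod>c\<in>{..<n}-{a}. y a - y c) * (if a = b then 1 else 0))"
    by (rule eq_matI) auto
  moreover have "mat n n (\<lambda>(a,b). if a = b then 1 else 0) = (1\<^sub>m n :: complex mat)"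
    by (rule eq_matI) auto
  ultimately have "Vand n y * det (mat n n (\<lambda>(k,b). coeff (lagrange_numerator n y b) k)) =
      Vand n y * Vand n (\<lambda>i. y (n - 1 - i))"
    by (simp only: det_lagrange_numerators[symmetric] det_mat_scale_rows det_one
        prod_differences_eq_Vand mult_1_right)
  then show ?thesis
    using Vand_nonzero[OF assms] by simp
qed

lemma det_cauchy:
  assumes "\<forall>a<n. \<forall>b<n. u a \<noteq> y b" and "inj_on y {..<n}"
  shows "det (mat n n (\<lambda>(a,b). 1 / (u a - y b))) * (\<Prod>a<n. \<Prod>b<n. u a - y b)
     = Vand n u * Vand n (\<lambda>i. y (n - 1 - i))"
proof -
  have "mat n n (\<lambda>(a,b). \<Prod>c\<in>{..<n}-{b}. u a - y c)
      = mat n n (\<lambda>(a,b). (\<Prod>c<n. u a - y c) * (1 / (u a - y b)))"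
  proof (rule eq_matI)
    fix a b assume "a < dim_row (mat n n (\<lambda>(a,b). (\<Prod>c<n. u a - y c) * (1 / (u a - y b))))"
      and "b < dim_col (mat n n (\<lambda>(a,b). (\<Prod>c<n. u a - y c) * (1 / (u a - y b))))"
    then have "a < n" "b < n" by auto
    moreover have "(\<Prod>c<n. u a - y c) = (u a - y b) * (\<Prod>c\<in>{..<n}-{b}. u a - y c)"
      using \<open>b < n\<close> by (simp add: prod.remove)
    ultimately show "mat n n (\<lambda>(a,b). \<Prod>c\<in>{..<n}-{b}. u a - y c) $$ (a, b) =
        mat n n (\<lambda>(a,b). (\<Prod>c<n. u a - y c) * (1 / (u a - y b))) $$ (a, b)"
      using assms(1) by simp
  qed auto
  then have "(\<Prod>a<n. \<Prod>c<n. u a - y c) * det (mat n n (\<lambda>(a,b). 1 / (u a - y b)))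
       = det (mat n n (\<lambda>(a,b). \<Prod>c\<in>{..<n}-{b}. u a - y c))"
    by (simp only: det_mat_scale_rows)
  also have "\<dots> = Vand n u * det (mat n n (\<lambda>(k,b). coeff (lagrange_numerator n y b) k))"
    by (rule det_lagrange_numerators)
  finally show ?thesis
    by (simp add: det_lagrange_numerator_coeffs[OF assms(2)] mult.commute)
qed

lemma det_mat_powers_minus_scaled_powers:
  "det (mat n n (\<lambda>(a,b). z a ^ b - c a * w a ^ b)) =
    (\<Sum>S\<in>Pow {0..<n}. (\<Prod>a<n. if a \<in> S then - c a else 1) *
        Vand n (\<lambda>a. if a \<in> S then w a else z a))"
proof -
  have "mat n n (\<lambda>(a,b). z a ^ b - c a * w a ^ b) =
      mat n n (\<lambda>(a,b). 1 * z a ^ b + (- c a) * w a ^ b)"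
    by (rule eq_matI) auto
  then show ?thesis
    by (simp only: det_mat_two_term_rows[where g = "\<lambda>w b. w ^ b"] det_vandermonde)
qed

lemma A_minus_expand:
  "A_minus \<eta> n z f = (\<Sum>S\<in>Pow {0..<n}. (\<Prod>a<n. if a \<in> S then - f (z a) else 1) *
      Vand n (\<lambda>a. if a \<in> S then z a - \<eta> else z a)) / Vand n z"
  using det_mat_powers_minus_scaled_powers[of n z "\<lambda>a. f (z a)" "\<lambda>a. z a - \<eta>"] by (simp add: A_minus_def)

lemma A_plus_expand:
  "A_plus \<eta> n z f = (\<Sum>S\<in>Pow {0..<n}. (\<Prod>a<n. if a \<in> S then - f (z a) else 1) *
      Vand n (\<lambda>a. if a \<in> S then z a + \<eta> else z a)) / Vand n z"
  using det_mat_powers_minus_scaled_powers[of n z "\<lambda>a. f (z a)" "\<lambda>a. z a + \<eta>"] by (simp add: A_plus_def)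

lemma A_minus_uminus: "A_minus \<eta> n (\<lambda>a. - z a) f = A_plus \<eta> n z (\<lambda>w. f (- w))"
proof -
  define \<sigma> where "\<sigma> = (\<Prod>a<n. (-1::complex) ^ a)"
  define V where "V S = Vand n (\<lambda>a. if a \<in> S then z a + \<eta> else z a)" for S
  define c where "c S = (\<Prod>a<n. if a \<in> S then - f (- z a) else 1)" for S
  have "Vand n (\<lambda>a. if a \<in> S then - z a - \<eta> else - z a) = \<sigma> * V S" for S
  proof -
    have "(\<lambda>a. if a \<in> S then - z a - \<eta> else - z a) = (\<lambda>a. - (if a \<in> S then z a + \<eta> else z a))"
      by auto
    then show ?thesis
      by (simp only: Vand_uminus \<sigma>_def V_def)
  qed
  then have "A_minus \<eta> n (\<lambda>a. - z a) f = (\<Sum>S\<in>Pow {0..<n}. c S * (\<sigma> * V S)) / (\<sigma> * Vand n z)"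
    by (simp add: A_minus_expand Vand_uminus c_def \<sigma>_def)
  also have "\<dots> = \<sigma> * (\<Sum>S\<in>Pow {0..<n}. c S * V S) / (\<sigma> * Vand n z)"
    by (simp add: sum_distrib_left mult.left_commute)
  also have "\<dots> = (\<Sum>S\<in>Pow {0..<n}. c S * V S) / Vand n z"
    by (simp add: \<sigma>_def)
  finally show ?thesis
    by (simp add: A_plus_expand c_def V_def)
qed

lemma det_t_mu_expand:
  "det (mat n n (\<lambda>(a,b). t_mu \<mu> \<eta> (x a - y b))) =
    (\<Sum>S\<in>Pow {0..<n}. (\<Prod>a<n. if a \<in> S then \<mu> else -1) *
        det (mat n n (\<lambda>(a,b). 1 / ((if a \<in> S then x a else x a + \<eta>) - y b))))"
proof -
  have "mat n n (\<lambda>(a,b). t_mu \<mu> \<eta> (x a - y b)) =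
      mat n n (\<lambda>(a,b). (-1) * (1 / (x a + \<eta> - y b)) + \<mu> * (1 / (x a - y b)))"
    by (rule eq_matI) (auto simp: t_mu_def algebra_simps)
  then show ?thesis
    by (simp only: det_mat_two_term_rows[where g = "\<lambda>w b. 1 / (w - y b)"])
qed

lemma prod_shift_eq_E_plus:
  assumes "\<forall>b<n. z \<noteq> y b"
  shows "(\<Prod>b<n. z - y b + \<eta>) = (\<Prod>b<n. z - y b) * E_plus \<eta> n y z"
proof -
  have "(\<Prod>b<n. z - y b) * E_plus \<eta> n y z = (\<Prod>b<n. (z - y b) * ((z - y b + \<eta>) / (z - y b)))"
    unfolding E_plus_def by (simp only: prod.distrib)
  also have "\<dots> = (\<Prod>b<n. z - y b + \<eta>)"
    using assms by (intro prod.cong) auto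
  finally show ?thesis ..
qed

lemma Izergin_cauchy_term:
  assumes "inj_on x {..<n}" and "inj_on y {..<n}"
    and xy: "\<forall>a<n. \<forall>b<n. x a \<noteq> y b"
    and xy_shift: "\<forall>a<n. \<forall>b<n. x a - y b + \<eta> \<noteq> 0"
  shows "(\<Prod>a<n. \<Prod>b<n. x a - y b + \<eta>) / (Vand n x * Vand n (\<lambda>i. y (n - 1 - i))) *
      ((\<Prod>a<n. if a \<in> S then \<mu> else -1) *
        det (mat n n (\<lambda>(a,b). 1 / ((if a \<in> S then x a else x a + \<eta>) - y b))))
    = (-1) ^ n * ((\<Prod>a<n. if a \<in> S then - (\<mu> * E_plus \<eta> n y (x a)) else 1) *
        Vand n (\<lambda>a. if a \<in> S then x a - \<eta> else x a)) / Vand n x"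
proof -
  define xt where "xt a = (if a \<in> S then x a else x a + \<eta>)" for a
  define D where "D = (\<Prod>a<n. \<Prod>b<n. xt a - y b)"
  define F where "F = (\<Prod>a<n. if a \<in> S then E_plus \<eta> n y (x a) else 1)"
  have xt_y: "\<forall>a<n. \<forall>b<n. xt a \<noteq> y b"
    using xy xy_shift by (auto simp: xt_def algebra_simps)
  then have "D \<noteq> 0"
    by (simp add: D_def)
  have cauchy: "det (mat n n (\<lambda>(a,b). 1 / (xt a - y b))) = Vand n xt * Vand n (\<lambda>i. y (n - 1 - i)) / D"
    using det_cauchy[OF xt_y assms(2)] \<open>D \<noteq> 0\<close> by (simp add: D_def eq_divide_eq)
  have "(\<Prod>b<n. x a - y b + \<eta>) = (\<Prod>b<n. xt a - y b) * (if a \<in> S then E_plus \<eta> n y (x a) else 1)"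
    if "a < n" for a
    using prod_shift_eq_E_plus[of n "x a" y \<eta>] xy that by (auto simp: xt_def algebra_simps)
  then have numerator: "(\<Prod>a<n. \<Prod>b<n. x a - y b + \<eta>) = D * F"
    unfolding D_def F_def by (simp add: prod.distrib[symmetric])
  have "xt = (\<lambda>a. (if a \<in> S then x a - \<eta> else x a) + \<eta>)"
    by (auto simp: xt_def)
  then have "Vand n xt = Vand n (\<lambda>a. if a \<in> S then x a - \<eta> else x a)"
    by (simp only: Vand_shift)
  moreover have "(\<Prod>a<n. if a \<in> S then \<mu> else -1) * F =
      (\<Prod>a<n. (-1) * (if a \<in> S then - (\<mu> * E_plus \<eta> n y (x a)) else 1))"
    unfolding F_def prod.distrib[symmetric] by (intro prod.cong) auto
  then have "(\<Prod>a<n. if a \<in> S then \<mu> else -1) * F =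
      (-1) ^ n * (\<Prod>a<n. if a \<in> S then - (\<mu> * E_plus \<eta> n y (x a)) else 1)"
    by (simp add: prod_uminus)
  moreover have "Vand n (\<lambda>i. y (n - 1 - i)) \<noteq> 0"
    unfolding Vand_rev Vand_uminus using Vand_nonzero[OF assms(2)] by simp
  ultimately show ?thesis
    using \<open>D \<noteq> 0\<close> Vand_nonzero[OF assms(1)]
    unfolding numerator xt_def[symmetric] cauchy
    by (simp add: field_simps)
qed

lemma Izergin_eq_A_minus:
  assumes "inj_on x {..<n}" and "inj_on y {..<n}"
    and "\<forall>a<n. \<forall>b<n. x a \<noteq> y b"
    and "\<forall>a<n. \<forall>b<n. x a - y b + \<eta> \<noteq> 0"
  shows "Izergin \<mu> \<eta> n x y = (-1) ^ n * A_minus \<eta> n x (\<lambda>z. \<mu> * E_plus \<eta> n y z)"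
proof -
  let ?c = "\<lambda>S. \<Prod>a<n. if a \<in> S then - (\<mu> * E_plus \<eta> n y (x a)) else 1"
  let ?V = "\<lambda>S. Vand n (\<lambda>a. if a \<in> S then x a - \<eta> else x a)"
  have "Izergin \<mu> \<eta> n x y = (\<Sum>S\<in>Pow {0..<n}. (-1) ^ n * (?c S * ?V S) / Vand n x)"
    unfolding Izergin_def det_t_mu_expand sum_distrib_left
    by (intro sum.cong refl Izergin_cauchy_term assms)
  also have "\<dots> = (-1) ^ n * A_minus \<eta> n x (\<lambda>z. \<mu> * E_plus \<eta> n y z)"
    by (simp add: A_minus_expand sum_distrib_left sum_divide_distrib)
  finally show ?thesis .
qed

lemma E_plus_uminus: "E_plus \<eta> n (\<lambda>a. - x a) (- z) = E_minus \<eta> n x z"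
proof -
  have "(- z - - x a + \<eta>) / (- z - - x a) = (z - x a - \<eta>) / (z - x a)" for a
    using minus_divide_divide[of "z - x a - \<eta>" "z - x a"] by (simp add: algebra_simps)
  then show ?thesis
    unfolding E_plus_def E_minus_def by simp
qed

lemma Izergin_uminus_swap: "Izergin \<mu> \<eta> n (\<lambda>a. - y a) (\<lambda>a. - x a) = Izergin \<mu> \<eta> n x y"
proof -
  have "mat n n (\<lambda>(a,b). t_mu \<mu> \<eta> (- y a - - x b)) =
      transpose_mat (mat n n (\<lambda>(a,b). t_mu \<mu> \<eta> (x a - y b)))"
    by (rule eq_matI) auto
  then have "det (mat n n (\<lambda>(a,b). t_mu \<mu> \<eta> (- y a - - x b))) =
      det (mat n n (\<lambda>(a,b). t_mu \<mu> \<eta> (x a - y b)))"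
    by (simp add: det_transpose[of _ n])
  moreover have "(\<Prod>a<n. \<Prod>b<n. - y a - - x b + \<eta>) = (\<Prod>a<n. \<Prod>b<n. x a - y b + \<eta>)"
    by (subst prod.swap) simp
  moreover have "Vand n (\<lambda>a. - y a) = Vand n (\<lambda>a. y (n - 1 - a))"
    by (simp only: Vand_rev)
  moreover have "Vand n (\<lambda>a. - x (n - 1 - a)) = Vand n x"
    using Vand_rev[of n "\<lambda>a. - x a"] by simp
  ultimately show ?thesis
    unfolding Izergin_def by (simp only: mult.commute)
qed

lemma Izergin_eq_A_plus:
  assumes "inj_on x {..<n}" and "inj_on y {..<n}"
    and "\<forall>a<n. \<forall>b<n. x a \<noteq> y b"
    and "\<forall>a<n. \<forall>b<n. x a - y b + \<eta> \<noteq> 0"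
  shows "Izergin \<mu> \<eta> n x y = (-1) ^ n * A_plus \<eta> n y (\<lambda>z. \<mu> * E_minus \<eta> n x z)"
proof -
  have "inj_on (\<lambda>a. - y a) {..<n}" and "inj_on (\<lambda>a. - x a) {..<n}"
    using assms(1,2) by (auto simp: inj_on_def)
  moreover have "\<forall>a<n. \<forall>b<n. - y a \<noteq> - x b"
    using assms(3) by fastforce
  moreover have "\<forall>a<n. \<forall>b<n. - y a - - x b + \<eta> \<noteq> 0"
  proof (intro allI impI)
    fix a b assume "a < n" "b < n"
    then have "x b - y a + \<eta> \<noteq> 0"
      using assms(4) by blast
    then show "- y a - - x b + \<eta> \<noteq> 0"
      by (simp add: algebra_simps)
  qed
  ultimately have "Izergin \<mu> \<eta> n (\<lambda>a. - y a) (\<lambda>a. - x a) =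
      (-1) ^ n * A_minus \<eta> n (\<lambda>a. - y a) (\<lambda>z. \<mu> * E_plus \<eta> n (\<lambda>a. - x a) z)"
    by (rule Izergin_eq_A_minus)
  then show ?thesis
    by (simp add: Izergin_uminus_swap A_minus_uminus E_plus_uminus)
qed

theorem mainTheorem6:
  fixes \<mu> \<eta> :: complex and N :: nat and x y :: "nat \<Rightarrow> complex"
  assumes "\<eta> \<noteq> 0"
    and "inj_on x {..<N}" and "inj_on y {..<N}"
    and "\<forall>a<N. \<forall>b<N. x a \<noteq> y b"
    and "\<forall>a<N. \<forall>b<N. x a - y b + \<eta> \<noteq> 0"
  shows "Izergin \<mu> \<eta> N x y = (-1) ^ N * A_minus \<eta> N x (\<lambda>z. \<mu> * E_plus \<eta> N y z)
       \<and> Izergin \<mu> \<eta> N x y = (-1) ^ N * A_plus \<eta> N y (\<lambda>z. \<mu> * E_minus \<eta> N x z)"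
  using Izergin_eq_A_minus[OF assms(2-5)] Izergin_eq_A_plus[OF assms(2-5)] by blast

end
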